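(* Let $N$ be odd. Define $V:\mathbb{R}\to\mathbb{R}$ by $V(\theta)=\frac{2}{\pi}|\theta-\frac{\pi}{2}|$ for $\theta\in[0,\pi]$, extended to be $\pi$-periodic on $\mathbb{R}$, and define $F_V(\theta_1,\dots,\theta_N)=\sum_{k=1}^N\sum_{\ell\neq k}V(\theta_k-\theta_\ell)$ for $(\theta_1,\dots,\theta_N)\in\mathbb{R}^N$. Then the configuration $\Theta_N^\perp=(0,\dots,0,\frac{\pi}{2},\dots,\frac{\pi}{2})$, with $(N+1)/2$ entries equal to $0$ and $(N-1)/2$ entries equal to $\frac{\pi}{2}$, is a global minimizer of $F_V$, and the global minimum value is $F_V(\Theta_N^\perp)=(N-1)^2/2$. *)

theory Defs
  imports Complex_Main
begin

definition V :: "real \<Rightarrow> real" where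
  "V t = (let s = t - pi * of_int \<lfloor>t / pi\<rfloor> in (2 / pi) * \<bar>s - pi / 2\<bar>)"

text \<open>Configurations in R^N are represented as functions nat => real; only the
  entries with index < N (0-based) are used.\<close>
definition F_V :: "nat \<Rightarrow> (nat \<Rightarrow> real) \<Rightarrow> real" where
  "F_V N \<theta> = (\<Sum>k<N. \<Sum>l\<in>{..<N} - {k}. V (\<theta> k - \<theta> l))"

definition Theta_perp :: "nat \<Rightarrow> nat \<Rightarrow> real" where
  "Theta_perp N k = (if k < (N + 1) div 2 then 0 else pi / 2)"

end

theory Submission
  imports Defs
begin

text \<open>
  On [-pi, pi] the function V is the triangle wave |1 - 2|x|/pi|, and it is pi-periodic.
  Reduce the angles modulo pi and sort them, 0 <= t_0 <= ... <= t_{N-1} < pi, and split the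
  double sum over all pairs into the N cyclic rotations j = (i + r) mod N. For a fixed r the
  gaps d_i = t_j - t_i + pi [i + r >= N] lie in [0, pi] and add up to pi r, so
  sum_i V(t_i - t_j) = sum_i |1 - 2 d_i/pi| >= |N - 2r|. Summing over r gives
  sum_r |N - 2r| = ((N+1)/2)^2 + ((N-1)/2)^2 for odd N, which is exactly the double sum at
  Theta_N^perp, where V is 1 inside each of the two clusters and 0 between them.
  Since F_V is the double sum minus the N diagonal terms V 0 = 1, the claim follows.
\<close>

lemma V_periodic: "V (x + of_int k * pi) = V x"
proof -
  have "(x + of_int k * pi) / pi = x / pi + of_int k" by (simp add: field_simps)
  then have "\<lfloor>(x + of_int k * pi) / pi\<rfloor> = \<lfloor>x / pi\<rfloor> + k" by simp
  then show ?thesis unfolding V_def Let_def by (simp add: algebra_simps)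
qed

lemma V_eq_on_base_interval:
  assumes "0 \<le> x" "x < pi"
  shows "V x = \<bar>1 - 2 * x / pi\<bar>"
proof -
  have "\<lfloor>x / pi\<rfloor> = 0" using assms by (simp add: floor_eq_iff)
  then have "V x = (2 / pi) * \<bar>x - pi / 2\<bar>" unfolding V_def Let_def by simp
  also have "\<dots> = \<bar>(2 / pi) * (x - pi / 2)\<bar>" by (subst abs_mult) simp
  also have "(2 / pi) * (x - pi / 2) = - (1 - 2 * x / pi)" by (simp add: field_simps)
  finally show ?thesis by simp
qed

lemma V_eq_abs:
  assumes "\<bar>x\<bar> \<le> pi"
  shows "V x = \<bar>1 - 2 * \<bar>x\<bar> / pi\<bar>"
proof -
  consider "0 \<le> x" "x < pi" | "x = pi" | "x < 0" using assms by linarith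
  then show ?thesis
  proof cases
    case 1
    then show ?thesis by (simp add: V_eq_on_base_interval)
  next
    case 2
    then have "V x = V (0 + of_int 1 * pi)" by simp
    then show ?thesis using 2 by (simp only: V_periodic) (simp add: V_eq_on_base_interval)
  next
    case 3
    then have "V x = V ((x + pi) + of_int (-1) * pi)" by simp
    also have "\<dots> = \<bar>1 - 2 * (x + pi) / pi\<bar>"
      using 3 assms by (simp only: V_periodic) (simp add: V_eq_on_base_interval)
    also have "1 - 2 * (x + pi) / pi = - (1 - 2 * \<bar>x\<bar> / pi)"
      using 3 by (simp add: field_simps)
    finally show ?thesis by simp
  qed
qed

lemma bij_betw_rotate:
  fixes r N :: nat
  assumes "r < N"
  shows "bij_betw (\<lambda>i. (i + r) mod N) {..<N} {..<N}"
proof (rule bij_betw_byWitness[where f' = "\<lambda>j. (j + (N - r)) mod N"])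
  have "((i + r) mod N + (N - r)) mod N = i" if "i < N" for i
  proof -
    have "((i + r) mod N + (N - r)) mod N = (i + r + (N - r)) mod N" by (rule mod_add_left_eq)
    also have "i + r + (N - r) = i + N" using assms by simp
    finally show ?thesis using that by simp
  qed
  then show "\<forall>i \<in> {..<N}. ((i + r) mod N + (N - r)) mod N = i" by simp
  have "((j + (N - r)) mod N + r) mod N = j" if "j < N" for j
  proof -
    have "((j + (N - r)) mod N + r) mod N = (j + (N - r) + r) mod N" by (rule mod_add_left_eq)
    also have "j + (N - r) + r = j + N" using assms by simp
    finally show ?thesis using that by simp
  qed
  then show "\<forall>j \<in> {..<N}. ((j + (N - r)) mod N + r) mod N = j" by simp
qed auto

lemma sum_lessThan_rotate:
  fixes f :: "nat \<Rightarrow> 'a::comm_monoid_add"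
  assumes "r < N"
  shows "(\<Sum>i<N. f ((i + r) mod N)) = (\<Sum>i<N. f i)"
  using sum.reindex_bij_betw[OF bij_betw_rotate[OF assms]] by simp

lemma card_wrap_around:
  fixes r N :: nat
  assumes "r \<le> N"
  shows "card ({..<N} \<inter> {i. N \<le> i + r}) = r"
proof -
  have "{..<N} \<inter> {i. N \<le> i + r} = {N - r..<N}" using assms by auto
  then show ?thesis using assms by simp
qed

lemma rotation_sum_V_lower_bound:
  fixes t :: "nat \<Rightarrow> real"
  assumes mono: "mono_on {..<N} t" and range: "t ` {..<N} \<subseteq> {0..<pi}" and "r < N"
  shows "\<bar>real N - 2 * real r\<bar> \<le> (\<Sum>i<N. V (t i - t ((i + r) mod N)))"
proof -
  define d where "d i = t ((i + r) mod N) - t i + pi * of_bool (N \<le> i + r)" for i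
  have t_range: "0 \<le> t k \<and> t k < pi" if "k < N" for k
    using range that by auto
  have d_bounds: "0 \<le> d i \<and> d i \<le> pi" if "i < N" for i
  proof (cases "N \<le> i + r")
    case True
    then have "(i + r) mod N = i + r - N"
      using \<open>r < N\<close> \<open>i < N\<close> by (simp add: le_mod_geq)
    moreover have "t (i + r - N) \<le> t i"
      using \<open>r < N\<close> \<open>i < N\<close> by (intro mono_onD[OF mono]) auto
    moreover have "0 \<le> t (i + r - N)"
      using t_range \<open>r < N\<close> \<open>i < N\<close> by simp
    ultimately show ?thesis
      using True t_range[OF \<open>i < N\<close>] unfolding d_def by simp
  next
    case False
    moreover have "t i \<le> t (i + r)"
      using False by (intro mono_onD[OF mono]) auto
    ultimately show ?thesis
      using t_range[OF \<open>i < N\<close>] t_range[of "i + r"] unfolding d_def by simp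
  qed
  have V_d: "V (t i - t ((i + r) mod N)) = \<bar>1 - 2 * d i / pi\<bar>" if "i < N" for i
  proof -
    have "V (t i - t ((i + r) mod N)) = V (- d i + of_int (of_bool (N \<le> i + r)) * pi)"
      unfolding d_def by (simp add: algebra_simps)
    also have "\<dots> = V (- d i)" by (rule V_periodic)
    finally show ?thesis using V_eq_abs[of "- d i"] d_bounds[OF that] by simp
  qed
  have "(\<Sum>i<N. d i)
      = (\<Sum>i<N. t ((i + r) mod N)) - (\<Sum>i<N. t i) + pi * (\<Sum>i<N. of_bool (N \<le> i + r))"
    by (simp add: d_def sum.distrib sum_subtractf sum_distrib_left)
  also have "\<dots> = pi * real r"
    using sum_lessThan_rotate[OF \<open>r < N\<close>, of t] card_wrap_around[of r N] \<open>r < N\<close> by simp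
  finally have sum_d: "(\<Sum>i<N. d i) = pi * real r" .
  have "real N - 2 * real r = (\<Sum>i<N. 1 - 2 * d i / pi)"
    by (simp add: sum_subtractf sum_divide_distrib[symmetric] sum_distrib_left[symmetric] sum_d)
  then have "\<bar>real N - 2 * real r\<bar> \<le> (\<Sum>i<N. \<bar>1 - 2 * d i / pi\<bar>)"
    by (simp only: sum_abs)
  also have "\<dots> = (\<Sum>i<N. V (t i - t ((i + r) mod N)))" by (simp add: V_d)
  finally show ?thesis .
qed

lemma sorted_double_sum_V_lower_bound:
  fixes t :: "nat \<Rightarrow> real"
  assumes "mono_on {..<N} t" and "t ` {..<N} \<subseteq> {0..<pi}"
  shows "(\<Sum>r<N. \<bar>real N - 2 * real r\<bar>) \<le> (\<Sum>i<N. \<Sum>j<N. V (t i - t j))"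
proof -
  have "(\<Sum>r<N. \<bar>real N - 2 * real r\<bar>) \<le> (\<Sum>r<N. \<Sum>i<N. V (t i - t ((i + r) mod N)))"
    by (intro sum_mono rotation_sum_V_lower_bound[OF assms]) simp
  also have "\<dots> = (\<Sum>i<N. \<Sum>r<N. V (t i - t ((r + i) mod N)))"
    by (subst sum.swap) (simp add: add.commute)
  also have "\<dots> = (\<Sum>i<N. \<Sum>j<N. V (t i - t j))"
    by (intro sum.cong refl sum_lessThan_rotate) simp
  finally show ?thesis .
qed

lemma obtain_sorting_bij:
  fixes s :: "nat \<Rightarrow> 'a::linorder"
  obtains p where "bij_betw p {..<N} {..<N}" and "mono_on {..<N} (s \<circ> p)"
proof -
  define xs where "xs = sort_key s [0..<N]"
  have "bij_betw ((!) xs) {..<N} {..<N}"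
    by (rule bij_betw_nth) (auto simp: xs_def)
  moreover have "mono_on {..<N} (s \<circ> (!) xs)"
  proof (rule mono_onI)
    have "sorted (map s xs)" "length xs = N" by (simp_all add: xs_def)
    then show "(s \<circ> (!) xs) i \<le> (s \<circ> (!) xs) j" if "i \<in> {..<N}" "j \<in> {..<N}" "i \<le> j" for i j
      using sorted_nth_mono[of "map s xs" i j] that by simp
  qed
  ultimately show ?thesis by (rule that)
qed

lemma double_sum_reindex_bij:
  assumes "bij_betw p A A"
  shows "(\<Sum>k\<in>A. \<Sum>l\<in>A. f (p k) (p l)) = (\<Sum>k\<in>A. \<Sum>l\<in>A. f k l)"
proof -
  have "(\<Sum>k\<in>A. \<Sum>l\<in>A. f (p k) (p l)) = (\<Sum>k\<in>A. \<Sum>l\<in>A. f (p k) l)"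
    by (intro sum.cong refl sum.reindex_bij_betw[OF assms])
  also have "\<dots> = (\<Sum>k\<in>A. \<Sum>l\<in>A. f k l)"
    by (rule sum.reindex_bij_betw[OF assms, where g = "\<lambda>k. \<Sum>l\<in>A. f k l"])
  finally show ?thesis .
qed

lemma obtain_sorted_representatives:
  fixes \<theta> :: "nat \<Rightarrow> real"
  obtains t where "mono_on {..<N} t" and "t ` {..<N} \<subseteq> {0..<pi}"
    and "(\<Sum>k<N. \<Sum>l<N. V (\<theta> k - \<theta> l)) = (\<Sum>i<N. \<Sum>j<N. V (t i - t j))"
proof -
  define s where "s k = pi * frac (\<theta> k / pi)" for k
  have s_range: "s k \<in> {0..<pi}" for k
    unfolding s_def using frac_lt_1 by simp
  have V_s: "V (\<theta> k - \<theta> l) = V (s k - s l)" for k l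
  proof -
    have "\<theta> k - \<theta> l = (s k - s l) + of_int (\<lfloor>\<theta> k / pi\<rfloor> - \<lfloor>\<theta> l / pi\<rfloor>) * pi"
      unfolding s_def frac_def by (simp add: algebra_simps)
    then show ?thesis by (simp only: V_periodic)
  qed
  obtain p where p: "bij_betw p {..<N} {..<N}" "mono_on {..<N} (s \<circ> p)"
    by (rule obtain_sorting_bij)
  have "(\<Sum>k<N. \<Sum>l<N. V (\<theta> k - \<theta> l)) = (\<Sum>k<N. \<Sum>l<N. V ((s \<circ> p) k - (s \<circ> p) l))"
    using double_sum_reindex_bij[OF p(1), of "\<lambda>k l. V (s k - s l)"] by (simp add: V_s)
  moreover have "(s \<circ> p) ` {..<N} \<subseteq> {0..<pi}"
    using s_range by auto
  ultimately show ?thesis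
    using p(2) that by blast
qed

lemma double_sum_V_lower_bound:
  "(\<Sum>r<N. \<bar>real N - 2 * real r\<bar>) \<le> (\<Sum>k<N. \<Sum>l<N. V (\<theta> k - \<theta> l))"
  by (metis obtain_sorted_representatives sorted_double_sum_V_lower_bound)

lemma sum_abs_odd_minus_double:
  "(\<Sum>r<2 * m + 1. \<bar>real (2 * m + 1) - 2 * real r\<bar>) = real (m + 1) ^ 2 + real m ^ 2"
proof (induction m)
  case 0
  then show ?case by simp
next
  case (Suc m)
  have "(\<Sum>r<2 * Suc m + 1. \<bar>real (2 * Suc m + 1) - 2 * real r\<bar>)
      = real (2 * m + 3) + (\<Sum>r<2 * m + 2. \<bar>real (2 * m + 1) - 2 * real r\<bar>)"
    by (simp add: sum.lessThan_Suc_shift del: sum.lessThan_Suc)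
  also have "\<dots> = real (2 * m + 3) + (\<Sum>r<2 * m + 1. \<bar>real (2 * m + 1) - 2 * real r\<bar>) + real (2 * m + 1)"
    by simp
  finally show ?case using Suc by (simp add: power2_eq_square algebra_simps)
qed

lemma sum_lessThan_if_less:
  fixes a b :: "'a::comm_semiring_1"
  assumes "h \<le> N"
  shows "(\<Sum>k<N. if k < h then a else b) = of_nat h * a + of_nat (N - h) * b"
proof -
  have "{..<N} \<inter> {k. k < h} = {..<h}" "{..<N} \<inter> - {k. k < h} = {h..<N}"
    using assms by auto
  then show ?thesis by (simp add: sum.If_cases)
qed

lemma V_Theta_perp_diff:
  "V (Theta_perp N k - Theta_perp N l) = of_bool ((k < (N + 1) div 2) = (l < (N + 1) div 2))"
  using V_eq_abs[of 0] V_eq_abs[of "pi / 2"] V_eq_abs[of "- (pi / 2)"]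
  by (auto simp: Theta_perp_def)

lemma double_sum_V_Theta_perp:
  fixes N :: nat
  defines "h \<equiv> (N + 1) div 2"
  shows "(\<Sum>k<N. \<Sum>l<N. V (Theta_perp N k - Theta_perp N l)) = real h ^ 2 + real (N - h) ^ 2"
proof -
  have "h \<le> N" unfolding h_def by simp
  have V_h: "V (Theta_perp N k - Theta_perp N l) = of_bool ((k < h) = (l < h))" for k l
    unfolding h_def by (rule V_Theta_perp_diff)
  have "(\<Sum>l<N. V (Theta_perp N k - Theta_perp N l)) = (if k < h then real h else real (N - h))" for k
  proof -
    have "(\<Sum>l<N. V (Theta_perp N k - Theta_perp N l))
        = (\<Sum>l<N. if l < h then of_bool (k < h) else of_bool (\<not> k < h))"
      by (intro sum.cong) (auto simp: V_h)
    then show ?thesis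
      using sum_lessThan_if_less[OF \<open>h \<le> N\<close>, of "of_bool (k < h) :: real" "of_bool (\<not> k < h)"]
      by simp
  qed
  then show ?thesis
    using sum_lessThan_if_less[OF \<open>h \<le> N\<close>, of "real h" "real (N - h)"]
    by (simp add: power2_eq_square)
qed

lemma F_V_eq_double_sum:
  "F_V N \<theta> = (\<Sum>k<N. \<Sum>l<N. V (\<theta> k - \<theta> l)) - real N"
proof -
  have "(\<Sum>l<N. V (\<theta> k - \<theta> l)) = 1 + (\<Sum>l\<in>{..<N} - {k}. V (\<theta> k - \<theta> l))" if "k < N" for k
    using sum.remove[of "{..<N}" k "\<lambda>l. V (\<theta> k - \<theta> l)"] that V_eq_abs[of 0] by simp
  then show ?thesis unfolding F_V_def by (simp add: sum.distrib)
qed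

theorem proposition2p1:
  fixes N :: nat
  assumes "odd N"
  shows "(\<forall>\<theta> :: nat \<Rightarrow> real. F_V N (Theta_perp N) \<le> F_V N \<theta>)
         \<and> F_V N (Theta_perp N) = (real N - 1)^2 / 2"
proof -
  obtain m where N: "N = 2 * m + 1" using assms oddE by blast
  have min_value: "(\<Sum>k<N. \<Sum>l<N. V (Theta_perp N k - Theta_perp N l)) = (\<Sum>r<N. \<bar>real N - 2 * real r\<bar>)"
    unfolding double_sum_V_Theta_perp N sum_abs_odd_minus_double by simp
  have "F_V N (Theta_perp N) \<le> F_V N \<theta>" for \<theta>
    using double_sum_V_lower_bound[of N \<theta>] min_value by (simp add: F_V_eq_double_sum)
  moreover have "F_V N (Theta_perp N) = (real N - 1)^2 / 2"
    unfolding F_V_eq_double_sum double_sum_V_Theta_perp N by (simp add: power2_eq_square algebra_simps)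
  ultimately show ?thesis by blast
qed

end
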